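(* Consider the regression setting in which $Z_i = (\bm{X}_i, Y_i)$, $i=1,2,\ldots$, are i.i.d. with $Y_i = F(\bm{X}_i) + \epsilon_i$, where $F$ is a bounded regression function and the errors $\epsilon_i$ are i.i.d., independent of the features, with exponential tails. Let $h_{k}$ ($k\ge1$) be permutation-symmetric kernels, where $h_k(z_1,\ldots,z_k)$ is the prediction at a fixed point $\bm{x}^*$ of a tree built on the training data $z_1,\ldots,z_k$ (so that its value always lies between the minimum and maximum of the training responses). Let $k_n$ be integers with $\lim_{n\to\infty} k_n/\sqrt{n}=0$ and $\lim_{n\to\infty}\zeta_{1,k_n}\neq 0$. Suppose there exists a constant $c$ such that for all $k_n \ge 1$, \[ \big|h((\bm{X}_1,Y_1),\ldots,(\bm{X}_{k_n},Y_{k_n}),(\bm{X}_{k_n+1},Y_{k_n+1})) - h((\bm{X}_1,Y_1),\ldots,(\bm{X}_{k_n},Y_{k_n}),(\bm{X}_{k_n+1},Y^*_{k_n+1}))\big| \le c\,\big|Y_{k_n+1}-Y^*_{k_n+1}\big|, \] where $Y_{k_n+1} = F(\bm{X}_{k_n+1})+\epsilon_{k_n+1}$, $Y^*_{k_n+1} = F(\bm{X}_{k_n+1})+\epsilon^*_{k_n+1}$, and $\epsilon_{k_n+1},\epsilon^*_{k_n+1}$ are i.i.d. with exponential tails. Then Condition 1 is satisfied: for all $\delta>0$, \[ \lim_{n\to\infty}\frac{1}{\zeta_{1,k_n}}\int_{|h_{1,k_n}(Z_1)|\ge \delta\sqrt{n\zeta_{1,k_n}}} h_{1,k_n}^2(Z_1)\,dP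 = 0 . \]
   Context: $\theta_{k} = \mathbb{E}h_{k}(Z_1,\ldots,Z_{k})$; $h_{1,k}(z) = \mathbb{E}h_{k}(z,Z_2,\ldots,Z_k)-\theta_k$; $\zeta_{1,k} = \mathrm{var}(h_{1,k}(Z_1))$, equivalently the covariance of $h_k$ evaluated on two independent samples sharing exactly one argument. A random variable $\epsilon$ has exponential tails if $P(|\epsilon|>t)\le A e^{-\lambda t}$ for some constants $A,\lambda>0$ and all $t\ge0$. *)

theory Defs
  imports "HOL-Probability.Probability"
begin

definition PZ :: "'x measure \<Rightarrow> real measure \<Rightarrow> ('x \<Rightarrow> real) \<Rightarrow> ('x \<times> real) measure" where
  "PZ PX Pe F = distr (PX \<Otimes>\<^sub>M Pe) (PX \<Otimes>\<^sub>M borel) (\<lambda>(x, e). (x, F x + e))"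

text \<open>Samples z_1..z_k are functions on {..<k} (index i stands for z_(i+1)).
  theta_k = E h_k(Z_1,...,Z_k).\<close>
definition theta :: "(nat \<Rightarrow> (nat \<Rightarrow> 'x \<times> real) \<Rightarrow> real) \<Rightarrow> 'x measure \<Rightarrow> real measure
    \<Rightarrow> ('x \<Rightarrow> real) \<Rightarrow> nat \<Rightarrow> real" where
  "theta h PX Pe F k = (\<integral>z. h k z \<partial>(PiM {..<k} (\<lambda>_. PZ PX Pe F)))"

definition h1 :: "(nat \<Rightarrow> (nat \<Rightarrow> 'x \<times> real) \<Rightarrow> real) \<Rightarrow> 'x measure \<Rightarrow> real measure
    \<Rightarrow> ('x \<Rightarrow> real) \<Rightarrow> nat \<Rightarrow> 'x \<times> real \<Rightarrow> real" where
  "h1 h PX Pe F k z1 = (\<integral>z. h k (z(0 := z1)) \<partial>(PiM {1..<k} (\<lambda>_. PZ PX Pe F))) - theta h PX Pe F k"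

definition zeta1 :: "(nat \<Rightarrow> (nat \<Rightarrow> 'x \<times> real) \<Rightarrow> real) \<Rightarrow> 'x measure \<Rightarrow> real measure
    \<Rightarrow> ('x \<Rightarrow> real) \<Rightarrow> nat \<Rightarrow> real" where
  "zeta1 h PX Pe F k =
     (\<integral>z. (h1 h PX Pe F k z - (\<integral>w. h1 h PX Pe F k w \<partial>(PZ PX Pe F)))\<^sup>2 \<partial>(PZ PX Pe F))"

definition exp_tails :: "real measure \<Rightarrow> bool" where
  "exp_tails P \<longleftrightarrow> (\<exists>A lam. A > 0 \<and> lam > 0 \<and>
      (\<forall>t\<ge>0. measure P {e. \<bar>e\<bar> > t} \<le> A * exp (- lam * t)))"

end

theory Submission
  imports Defs
begin

text \<open>A tree prediction lies between the smallest and the largest training response, hence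
  \<open>\<bar>h\<^sub>1\<^sub>,\<^sub>k(x, y)\<bar> \<le> \<bar>y\<bar> + 2 k E\<bar>Y\<bar>\<close>. Put \<open>T = \<delta> \<surd>(n \<zeta>\<^sub>1\<^sub>,\<^sub>k)\<close> with \<open>k = k\<^sub>n\<close>; since \<open>k\<^sub>n = o(\<surd>n)\<close>
  and \<open>\<zeta>\<^sub>1\<^sub>,\<^sub>k\<close> stays away from 0, eventually \<open>2 k E\<bar>Y\<bar> \<le> T/2\<close>, so on the event
  \<open>\<bar>h\<^sub>1\<^sub>,\<^sub>k\<bar> \<ge> T\<close> we have \<open>\<bar>Y\<bar> \<ge> T/2\<close> and \<open>\<bar>h\<^sub>1\<^sub>,\<^sub>k\<bar> \<le> 2\<bar>Y\<bar>\<close>. As \<open>F\<close> is bounded and the noise has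
  an exponential moment, \<open>E[Y\<^sup>2; \<bar>Y\<bar> \<ge> T/2] = O(exp(-c T))\<close>, so the Lindeberg ratio is
  \<open>O(exp(-c' \<surd>n))\<close>.\<close>

lemma measure_abs_ge_nat_le_exp:
  assumes P: "prob_space P" and S: "sets P = sets borel" and A: "A > 0"
    and T: "\<forall>t\<ge>0. measure P {e. \<bar>e\<bar> > t} \<le> A * exp (- lam * t)"
  shows "measure P {e. real n \<le> \<bar>e\<bar>} \<le> max 1 (A * exp lam) * exp (- lam * real n)"
proof (cases "n = 0")
  case True
  then show ?thesis using prob_space.prob_le_1[OF P] by (simp add: le_max_iff_disj)
next
  case False
  interpret prob_space P by fact
  have "measure P {e. real n \<le> \<bar>e\<bar>} \<le> measure P {e. \<bar>e\<bar> > real n - 1}"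
    by (rule finite_measure_mono) (auto simp: S)
  also have "\<dots> \<le> A * exp (- lam * (real n - 1))" using T False by auto
  also have "\<dots> = A * exp lam * exp (- lam * real n)" by (simp add: algebra_simps flip: exp_add)
  also have "\<dots> \<le> max 1 (A * exp lam) * exp (- lam * real n)"
    by (intro mult_right_mono) auto
  finally show ?thesis .
qed

lemma exp_le_suminf_indicator:
  fixes \<nu> t :: real
  assumes "0 \<le> \<nu>" "0 \<le> t"
  shows "ennreal (exp (\<nu> * t)) \<le> (\<Sum>n. ennreal (exp (\<nu> * (real n + 1))) * indicator {real n..} t)"
proof -
  define N where "N = nat \<lfloor>t\<rfloor>"
  have "real N \<le> t" "t \<le> real N + 1"
    unfolding N_def using assms of_int_floor_le[of t] real_of_int_floor_add_one_ge[of t] by auto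
  then have "ennreal (exp (\<nu> * t)) \<le> ennreal (exp (\<nu> * (real N + 1))) * indicator {real N..} t"
    using assms by (simp add: ennreal_leI mult_left_mono)
  also have "\<dots> \<le> (\<Sum>n. ennreal (exp (\<nu> * (real n + 1))) * indicator {real n..} t)"
    using sum_le_suminf[OF summableI, of "{N}" "\<lambda>n. ennreal (exp (\<nu> * (real n + 1))) * indicator {real n..} t"]
    by (simp only: sum.insert_if finite.emptyI sum.empty empty_iff if_False add_0_right) simp
  finally show ?thesis .
qed

lemma exp_tails_imp_exp_moment:
  assumes P: "prob_space P" and S: "sets P = sets borel" and tails: "exp_tails P"
  shows "\<exists>\<nu>>0. (\<integral>\<^sup>+e. ennreal (exp (\<nu> * \<bar>e\<bar>)) \<partial>P) < \<infinity>"
proof -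
  interpret prob_space P by fact
  obtain A lam where A: "A > 0" and lam: "lam > 0" and
    T: "\<forall>t\<ge>0. measure P {e. \<bar>e\<bar> > t} \<le> A * exp (- lam * t)"
    using tails unfolding exp_tails_def by blast
  define \<nu> where "\<nu> = lam / 2"
  define A' where "A' = max 1 (A * exp lam)"
  have \<nu>: "\<nu> > 0" using lam by (simp add: \<nu>_def)
  have term_le: "ennreal (exp (\<nu> * (real n + 1))) * emeasure P {e. real n \<le> \<bar>e\<bar>}
      \<le> ennreal (A' * exp \<nu> * exp (- \<nu>) ^ n)" for n
  proof -
    have "emeasure P {e. real n \<le> \<bar>e\<bar>} \<le> ennreal (A' * exp (- lam * real n))"
      unfolding emeasure_eq_measure A'_def
      by (intro ennreal_leI measure_abs_ge_nat_le_exp[OF P S A T])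
    moreover have "exp (\<nu> * (real n + 1)) * (A' * exp (- lam * real n)) = A' * exp \<nu> * exp (- \<nu>) ^ n"
      unfolding \<nu>_def by (simp flip: exp_add exp_of_nat_mult) (simp add: field_simps)
    ultimately show ?thesis
      by (metis ennreal_mult' exp_ge_zero mult_left_mono zero_le)
  qed
  have "(\<integral>\<^sup>+e. ennreal (exp (\<nu> * \<bar>e\<bar>)) \<partial>P) \<le>
      (\<integral>\<^sup>+e. (\<Sum>n. ennreal (exp (\<nu> * (real n + 1))) * indicator {real n..} \<bar>e\<bar>) \<partial>P)"
    using \<nu> by (intro nn_integral_mono exp_le_suminf_indicator) auto
  also have "\<dots> = (\<Sum>n. \<integral>\<^sup>+e. ennreal (exp (\<nu> * (real n + 1))) * indicator {e. real n \<le> \<bar>e\<bar>} e \<partial>P)"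
    using measurable_cong_sets[OF S refl, of "borel :: ennreal measure"]
    by (subst nn_integral_suminf[symmetric]) (auto simp: indicator_def)
  also have "\<dots> = (\<Sum>n. ennreal (exp (\<nu> * (real n + 1))) * emeasure P {e. real n \<le> \<bar>e\<bar>})"
    by (subst nn_integral_cmult_indicator) (auto simp: S)
  also have "\<dots> \<le> (\<Sum>n. ennreal (A' * exp \<nu> * exp (- \<nu>) ^ n))"
    by (intro suminf_le summableI term_le)
  also have "\<dots> = ennreal (\<Sum>n. A' * exp \<nu> * exp (- \<nu>) ^ n)"
    using \<nu> by (intro suminf_ennreal2 summable_mult summable_geometric) (auto simp: A'_def)
  also have "\<dots> < \<infinity>" by simp
  finally show ?thesis using \<nu> by blast
qed

lemma nn_integral_PiM_component:
  assumes "prob_space M" "i \<in> I" "f \<in> borel_measurable M"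
  shows "(\<integral>\<^sup>+z. f (z i) \<partial>PiM I (\<lambda>_. M)) = (\<integral>\<^sup>+w. f w \<partial>M)"
proof -
  have "(\<integral>\<^sup>+w. f w \<partial>M) = (\<integral>\<^sup>+w. f w \<partial>distr (PiM I (\<lambda>_. M)) M (\<lambda>\<omega>. \<omega> i))"
    using distr_PiM_component[of I "\<lambda>_. M" i] assms by simp
  also have "\<dots> = (\<integral>\<^sup>+z. f (z i) \<partial>PiM I (\<lambda>_. M))"
    using assms by (intro nn_integral_distr) auto
  finally show ?thesis by simp
qed

lemma abs_integral_le_of_nn_integral_le:
  fixes f :: "'a \<Rightarrow> real"
  assumes "(\<integral>\<^sup>+x. ennreal \<bar>f x\<bar> \<partial>M) \<le> ennreal c" and "0 \<le> c"
  shows "\<bar>integral\<^sup>L M f\<bar> \<le> c"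
proof (cases "integrable M f")
  case True
  have "ennreal \<bar>integral\<^sup>L M f\<bar> \<le> (\<integral>\<^sup>+x. ennreal \<bar>f x\<bar> \<partial>M)"
    using integral_norm_bound_ennreal[OF True] by simp
  also have "\<dots> \<le> ennreal c" by fact
  finally show ?thesis using assms(2) by (simp add: ennreal_le_iff)
next
  case False
  then show ?thesis using assms(2) by (simp add: not_integrable_integral_eq)
qed

lemma abs_le_sum_abs_if_between_Min_Max:
  fixes f :: "'a \<Rightarrow> real"
  assumes "finite A" "A \<noteq> {}" "Min (f ` A) \<le> x" "x \<le> Max (f ` A)"
  shows "\<bar>x\<bar> \<le> (\<Sum>i\<in>A. \<bar>f i\<bar>)"
proof -
  obtain j where "j \<in> A" "Max (f ` A) = f j" using Max_in[of "f ` A"] assms by fastforce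
  moreover obtain j' where "j' \<in> A" "Min (f ` A) = f j'" using Min_in[of "f ` A"] assms by fastforce
  ultimately have "\<bar>f j\<bar> \<le> (\<Sum>i\<in>A. \<bar>f i\<bar>)" "\<bar>f j'\<bar> \<le> (\<Sum>i\<in>A. \<bar>f i\<bar>)"
    using assms(1) by (auto intro: member_le_sum)
  then show ?thesis using assms(3,4) \<open>Max (f ` A) = f j\<close> \<open>Min (f ` A) = f j'\<close> by linarith
qed

lemma truncated_sq_le_exp:
  fixes y e B \<nu> s :: real
  assumes y: "\<bar>y\<bar> \<le> B + \<bar>e\<bar>" and B: "0 \<le> B" and \<nu>: "0 < \<nu>"
  shows "indicator {y. s \<le> \<bar>y\<bar>} y * y\<^sup>2 \<le>
     (B + 4 / \<nu>)\<^sup>2 * exp (\<nu> / 2 * B) * exp (- (\<nu> / 2) * s) * exp (\<nu> * \<bar>e\<bar>)"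
proof (cases "s \<le> \<bar>y\<bar>")
  case False then show ?thesis by simp
next
  case True
  have "B + \<bar>e\<bar> \<le> (B + 4 / \<nu>) * (1 + \<nu> / 4 * \<bar>e\<bar>)"
    using \<nu> B by (simp add: field_simps)
  also have "\<dots> \<le> (B + 4 / \<nu>) * exp (\<nu> / 4 * \<bar>e\<bar>)"
    using exp_ge_add_one_self[of "\<nu> / 4 * \<bar>e\<bar>"] \<nu> B by (intro mult_left_mono) auto
  finally have "\<bar>y\<bar> \<le> (B + 4 / \<nu>) * exp (\<nu> / 4 * \<bar>e\<bar>)" using y by linarith
  then have "y\<^sup>2 \<le> ((B + 4 / \<nu>) * exp (\<nu> / 4 * \<bar>e\<bar>))\<^sup>2"
    by (metis abs_ge_zero power2_abs power_mono)
  also have "\<dots> = (B + 4 / \<nu>)\<^sup>2 * exp (\<nu> / 2 * \<bar>e\<bar>)"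
    by (simp add: power_mult_distrib power2_eq_square flip: exp_add)
  also have "\<dots> \<le> (B + 4 / \<nu>)\<^sup>2 * exp (\<nu> / 2 * \<bar>e\<bar>) * exp (\<nu> / 2 * (\<bar>e\<bar> - s + B))"
    using True y \<nu> by (auto simp: mult_le_cancel_left1 mult_less_0_iff)
  also have "\<dots> = (B + 4 / \<nu>)\<^sup>2 * exp (\<nu> / 2 * B) * exp (- (\<nu> / 2) * s) * exp (\<nu> * \<bar>e\<bar>)"
    by (simp add: mult.assoc flip: exp_add) (simp add: field_simps)
  finally show ?thesis using True by simp
qed

definition within_response_range :: "(nat \<Rightarrow> (nat \<Rightarrow> 'x \<times> real) \<Rightarrow> real) \<Rightarrow> bool" where
  "within_response_range h \<longleftrightarrow> (\<forall>k z. k \<ge> 1 \<longrightarrow> z \<in> extensional {..<k} \<longrightarrow>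
     Min ((\<lambda>i. snd (z i)) ` {..<k}) \<le> h k z \<and> h k z \<le> Max ((\<lambda>i. snd (z i)) ` {..<k}))"

lemma abs_le_sum_abs_responses:
  assumes "within_response_range h" "k \<ge> 1" "z \<in> extensional {..<k}"
  shows "\<bar>h k z\<bar> \<le> (\<Sum>i<k. \<bar>snd (z i)\<bar>)"
proof (rule abs_le_sum_abs_if_between_Min_Max)
  have "0 \<in> {..<k}" using assms(2) by simp
  then show "{..<k} \<noteq> {}" by blast
qed (use assms in \<open>auto simp: within_response_range_def\<close>)

lemma borel_measurable_abs_response: "(\<lambda>w. ennreal \<bar>snd w\<bar>) \<in> borel_measurable (PZ PX Pe F)"
  by (simp add: PZ_def measurable_distr_eq1)

lemma borel_measurable_abs_response_component:
  "i \<in> I \<Longrightarrow> (\<lambda>z. ennreal \<bar>snd (z i)\<bar>) \<in> borel_measurable (PiM I (\<lambda>_. PZ PX Pe F))"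
  using measurable_compose[OF measurable_component_singleton[of i I "\<lambda>_. PZ PX Pe F"]
      borel_measurable_abs_response] by simp

lemma tendsto_exp_neg_sqrt:
  assumes "0 < a"
  shows "(\<lambda>n. C * exp (- (a * sqrt (real n)))) \<longlonglongrightarrow> 0"
proof -
  have "filterlim (\<lambda>n. a * sqrt (real n)) at_top sequentially"
    by (rule filterlim_tendsto_pos_mult_at_top[OF tendsto_const assms]
        filterlim_compose[OF sqrt_at_top filterlim_real_sequentially])+
  then have "(\<lambda>n. exp (- (a * sqrt (real n)))) \<longlonglongrightarrow> 0"
    by (rule filterlim_compose[OF exp_at_bot filterlim_compose[OF filterlim_uminus_at_bot_at_top]])
  then show ?thesis by (rule tendsto_mult_right_zero)
qed

lemma lindeberg_ratio_tendsto_zero: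
  fixes \<zeta> :: "nat \<Rightarrow> real" and k :: "nat \<Rightarrow> nat" and Q :: "nat \<Rightarrow> real \<Rightarrow> real"
  assumes \<zeta>: "\<zeta> \<longlonglongrightarrow> L" "0 < L" and k: "(\<lambda>n. real (k n) / sqrt (real n)) \<longlonglongrightarrow> 0"
    and \<delta>: "0 < \<delta>" and a: "0 < a" and b: "0 \<le> b" and C: "0 \<le> C"
    and Q_nonneg: "\<And>n T. 0 \<le> Q n T"
    and Q_le: "\<And>n T. b * real (k n) \<le> T \<Longrightarrow> Q n T \<le> C * exp (- a * T)"
  shows "(\<lambda>n. 1 / \<zeta> n * Q n (\<delta> * sqrt (real n * \<zeta> n))) \<longlonglongrightarrow> 0"
proof (rule tendsto_sandwich[OF _ _ tendsto_const tendsto_exp_neg_sqrt])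
  define t where "t = \<delta> * sqrt (L / 2)"
  have t: "0 < t" using \<delta> \<zeta>(2) by (simp add: t_def)
  have "\<forall>\<^sub>F n in sequentially. L / 2 < \<zeta> n"
    using order_tendstoD(1)[OF \<zeta>(1), of "L / 2"] \<zeta>(2) by simp
  moreover have "\<forall>\<^sub>F n in sequentially. real (k n) / sqrt (real n) < t / (b + 1)"
    using order_tendstoD(2)[OF k] t b by simp
  moreover have "\<forall>\<^sub>F n in sequentially. n \<ge> 1" by (rule eventually_ge_at_top)
  ultimately have "\<forall>\<^sub>F n in sequentially. 0 \<le> 1 / \<zeta> n * Q n (\<delta> * sqrt (real n * \<zeta> n)) \<and>
      1 / \<zeta> n * Q n (\<delta> * sqrt (real n * \<zeta> n)) \<le> 2 / L * C * exp (- (a * t * sqrt (real n)))"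
  proof eventually_elim
    case (elim n)
    define T where "T = \<delta> * sqrt (real n * \<zeta> n)"
    have sqrt_n: "0 < sqrt (real n)" using elim by simp
    have "t * sqrt (real n) = \<delta> * sqrt (real n * (L / 2))"
      by (simp only: t_def real_sqrt_mult mult_ac)
    also have "\<dots> \<le> T"
      unfolding T_def using elim \<delta> by (intro mult_left_mono real_sqrt_le_mono) auto
    finally have tT: "t * sqrt (real n) \<le> T" .
    have "b * real (k n) \<le> b * (t / (b + 1) * sqrt (real n))"
      using elim sqrt_n b by (intro mult_left_mono) (auto simp: field_simps)
    also have "\<dots> \<le> t * sqrt (real n)"
      using b t sqrt_n by (simp add: field_simps)
    finally have "Q n T \<le> C * exp (- a * T)" using tT by (intro Q_le) linarith
    also have "\<dots> \<le> C * exp (- (a * t * sqrt (real n)))"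
      using tT a C by (intro mult_left_mono) auto
    finally have "Q n T \<le> C * exp (- (a * t * sqrt (real n)))" .
    moreover have "1 / \<zeta> n \<le> 2 / L" "0 < \<zeta> n" using elim \<zeta>(2) by (auto simp: field_simps)
    ultimately have "1 / \<zeta> n * Q n T \<le> 2 / L * (C * exp (- (a * t * sqrt (real n))))"
      using Q_nonneg[of n T] \<zeta>(2) by (intro mult_mono) auto
    then show ?case using Q_nonneg[of n T] \<open>0 < \<zeta> n\<close> unfolding T_def by (simp add: mult.assoc)
  qed
  then show "\<forall>\<^sub>F n in sequentially. 0 \<le> 1 / \<zeta> n * Q n (\<delta> * sqrt (real n * \<zeta> n))"
    and "\<forall>\<^sub>F n in sequentially. 1 / \<zeta> n * Q n (\<delta> * sqrt (real n * \<zeta> n))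
      \<le> 2 / L * C * exp (- (a * t * sqrt (real n)))"
    by (auto elim: eventually_mono)
  show "0 < a * t" using a t by simp
qed

locale additive_noise =
  fixes PX :: "'x measure" and Pe :: "real measure" and F :: "'x \<Rightarrow> real"
  assumes prob_space_PX: "prob_space PX"
    and prob_space_Pe: "prob_space Pe" and sets_Pe: "sets Pe = sets borel"
    and F_measurable: "F \<in> borel_measurable PX"
begin

lemma measurable_response_map:
  "(\<lambda>(x, e). (x, F x + e)) \<in> measurable (PX \<Otimes>\<^sub>M Pe) (PX \<Otimes>\<^sub>M borel)"
proof -
  have "(\<lambda>(x, e::real). (x, F x + e)) \<in> measurable (PX \<Otimes>\<^sub>M borel) (PX \<Otimes>\<^sub>M (borel :: real measure))"
    using F_measurable by measurable
  then show ?thesis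
    by (subst measurable_cong_sets[OF sets_pair_measure_cong[OF refl sets_Pe] refl])
qed

lemma prob_space_PZ: "prob_space (PZ PX Pe F)"
proof -
  interpret PX: prob_space PX by (rule prob_space_PX)
  interpret Pe: prob_space Pe by (rule prob_space_Pe)
  interpret pair_prob_space PX Pe by unfold_locales
  show ?thesis unfolding PZ_def by (intro prob_space_distr measurable_response_map)
qed

lemma measurable_Pe_eq: "measurable Pe M = measurable borel M"
  using measurable_cong_sets[OF sets_Pe refl] .

lemma nn_integral_PZ_response_le:
  assumes g: "g \<in> borel_measurable borel" and G: "G \<in> borel_measurable borel"
    and le: "\<And>x e. g (F x + e) \<le> G e"
  shows "(\<integral>\<^sup>+z. g (snd z) \<partial>PZ PX Pe F) \<le> (\<integral>\<^sup>+e. G e \<partial>Pe)"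
proof -
  interpret PX: prob_space PX by (rule prob_space_PX)
  interpret Pe: prob_space Pe by (rule prob_space_Pe)
  interpret pair_prob_space PX Pe by unfold_locales
  have "(\<integral>\<^sup>+z. g (snd z) \<partial>PZ PX Pe F) = (\<integral>\<^sup>+p. g (snd ((\<lambda>(x, e). (x, F x + e)) p)) \<partial>(PX \<Otimes>\<^sub>M Pe))"
    unfolding PZ_def using g
    by (intro nn_integral_distr measurable_response_map measurable_compose[OF measurable_snd g])
       (simp add: measurable_distr_eq1)
  also have "\<dots> \<le> (\<integral>\<^sup>+p. G (snd p) \<partial>(PX \<Otimes>\<^sub>M Pe))"
    by (intro nn_integral_mono) (auto simp: le split: prod.splits)
  also have "\<dots> = (\<integral>\<^sup>+e. G e \<partial>Pe)"
    using G[folded measurable_Pe_eq]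
    by (subst Pe.nn_integral_fst[symmetric]) (auto simp: PX.emeasure_space_1)
  finally show ?thesis .
qed

lemma nn_integral_abs_response_le:
  assumes B: "\<And>x. \<bar>F x\<bar> \<le> B" and \<nu>: "0 < \<nu>"
    and I: "(\<integral>\<^sup>+e. ennreal (exp (\<nu> * \<bar>e\<bar>)) \<partial>Pe) = ennreal Ir" and Ir: "0 \<le> Ir"
  shows "(\<integral>\<^sup>+w. ennreal \<bar>snd w\<bar> \<partial>PZ PX Pe F) \<le> ennreal (B + Ir / \<nu>)"
proof -
  interpret Pe: prob_space Pe by (rule prob_space_Pe)
  have B0: "0 \<le> B" using B[of undefined] by linarith
  have "(\<integral>\<^sup>+w. ennreal \<bar>snd w\<bar> \<partial>PZ PX Pe F) \<le> (\<integral>\<^sup>+e. ennreal B + ennreal (1 / \<nu>) * ennreal (exp (\<nu> * \<bar>e\<bar>)) \<partial>Pe)"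
  proof (rule nn_integral_PZ_response_le)
    fix x e
    have "\<nu> * \<bar>e\<bar> \<le> exp (\<nu> * \<bar>e\<bar>)" using exp_ge_add_one_self[of "\<nu> * \<bar>e\<bar>"] by linarith
    then have "\<bar>e\<bar> \<le> 1 / \<nu> * exp (\<nu> * \<bar>e\<bar>)" using \<nu> by (simp add: field_simps)
    then have "\<bar>F x + e\<bar> \<le> B + 1 / \<nu> * exp (\<nu> * \<bar>e\<bar>)" using B[of x] by linarith
    then show "ennreal \<bar>F x + e\<bar> \<le> ennreal B + ennreal (1 / \<nu>) * ennreal (exp (\<nu> * \<bar>e\<bar>))"
      using \<nu> B0 by (simp add: ennreal_plus[symmetric] ennreal_mult[symmetric] ennreal_leI del: ennreal_plus)
  qed measurable
  also have "\<dots> = ennreal B + ennreal (1 / \<nu>) * ennreal Ir"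
    by (simp add: nn_integral_add nn_integral_cmult I Pe.emeasure_space_1 measurable_Pe_eq)
  also have "\<dots> = ennreal (B + Ir / \<nu>)"
    using \<nu> B0 Ir by (simp add: ennreal_plus[symmetric] ennreal_mult[symmetric] del: ennreal_plus)
  finally show ?thesis .
qed

lemma nn_integral_truncated_sq_response_le:
  assumes B: "\<And>x. \<bar>F x\<bar> \<le> B" and \<nu>: "0 < \<nu>"
    and I: "(\<integral>\<^sup>+e. ennreal (exp (\<nu> * \<bar>e\<bar>)) \<partial>Pe) = ennreal Ir" and Ir: "0 \<le> Ir"
  shows "(\<integral>\<^sup>+z. ennreal (indicator {y. s \<le> \<bar>y\<bar>} (snd z) * (snd z)\<^sup>2) \<partial>PZ PX Pe F)
     \<le> ennreal ((B + 4 / \<nu>)\<^sup>2 * exp (\<nu> / 2 * B) * Ir * exp (- (\<nu> / 2) * s))"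
proof -
  define K where "K = (B + 4 / \<nu>)\<^sup>2 * exp (\<nu> / 2 * B) * exp (- (\<nu> / 2) * s)"
  have B0: "0 \<le> B" using B[of undefined] by linarith
  have "(\<integral>\<^sup>+z. ennreal (indicator {y. s \<le> \<bar>y\<bar>} (snd z) * (snd z)\<^sup>2) \<partial>PZ PX Pe F)
     \<le> (\<integral>\<^sup>+e. ennreal K * ennreal (exp (\<nu> * \<bar>e\<bar>)) \<partial>Pe)"
  proof (rule nn_integral_PZ_response_le)
    fix x e
    have "\<bar>F x + e\<bar> \<le> B + \<bar>e\<bar>" using B[of x] by linarith
    then have "indicator {y. s \<le> \<bar>y\<bar>} (F x + e) * (F x + e)\<^sup>2 \<le> K * exp (\<nu> * \<bar>e\<bar>)"
      unfolding K_def using B0 \<nu> by (rule truncated_sq_le_exp)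
    then show "ennreal (indicator {y. s \<le> \<bar>y\<bar>} (F x + e) * (F x + e)\<^sup>2) \<le> ennreal K * ennreal (exp (\<nu> * \<bar>e\<bar>))"
      by (simp add: K_def ennreal_mult[symmetric] ennreal_leI)
  qed measurable
  also have "\<dots> = ennreal K * ennreal Ir"
    by (simp add: nn_integral_cmult I measurable_Pe_eq)
  also have "\<dots> = ennreal ((B + 4 / \<nu>)\<^sup>2 * exp (\<nu> / 2 * B) * Ir * exp (- (\<nu> / 2) * s))"
    using Ir by (simp add: K_def ennreal_mult[symmetric] mult_ac)
  finally show ?thesis .
qed

lemma nn_integral_sum_abs_responses_le:
  assumes M: "(\<integral>\<^sup>+w. ennreal \<bar>snd w\<bar> \<partial>PZ PX Pe F) \<le> ennreal M" "0 \<le> M" and I: "finite I"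
  shows "(\<integral>\<^sup>+z. (\<Sum>i\<in>I. ennreal \<bar>snd (z i)\<bar>) \<partial>PiM I (\<lambda>_. PZ PX Pe F)) \<le> ennreal (real (card I) * M)"
proof -
  have "(\<integral>\<^sup>+z. (\<Sum>i\<in>I. ennreal \<bar>snd (z i)\<bar>) \<partial>PiM I (\<lambda>_. PZ PX Pe F))
      = (\<Sum>i\<in>I. \<integral>\<^sup>+z. ennreal \<bar>snd (z i)\<bar> \<partial>PiM I (\<lambda>_. PZ PX Pe F))"
    by (intro nn_integral_sum borel_measurable_abs_response_component)
  also have "\<dots> = (\<Sum>i\<in>I. \<integral>\<^sup>+w. ennreal \<bar>snd w\<bar> \<partial>PZ PX Pe F)"
    by (intro sum.cong refl nn_integral_PiM_component prob_space_PZ borel_measurable_abs_response)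
  also have "\<dots> \<le> (\<Sum>i\<in>I. ennreal M)"
    by (intro sum_mono M(1))
  also have "\<dots> = ennreal (real (card I) * M)"
    using M(2) by (simp add: ennreal_of_nat_eq_real_of_nat ennreal_mult'[symmetric])
  finally show ?thesis .
qed

lemma abs_theta_le:
  assumes h: "within_response_range h" and k: "k \<ge> 1"
    and M: "(\<integral>\<^sup>+w. ennreal \<bar>snd w\<bar> \<partial>PZ PX Pe F) \<le> ennreal M" "0 \<le> M"
  shows "\<bar>theta h PX Pe F k\<bar> \<le> real k * M"
  unfolding theta_def
proof (rule abs_integral_le_of_nn_integral_le)
  let ?R = "PiM {..<k} (\<lambda>_. PZ PX Pe F)"
  have "(\<integral>\<^sup>+z. ennreal \<bar>h k z\<bar> \<partial>?R) \<le> (\<integral>\<^sup>+z. (\<Sum>i\<in>{..<k}. ennreal \<bar>snd (z i)\<bar>) \<partial>?R)"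
  proof (intro nn_integral_mono)
    fix z assume "z \<in> space ?R"
    then have "z \<in> extensional {..<k}" by (simp add: space_PiM PiE_def)
    then show "ennreal \<bar>h k z\<bar> \<le> (\<Sum>i\<in>{..<k}. ennreal \<bar>snd (z i)\<bar>)"
      using abs_le_sum_abs_responses[OF h k] by (simp add: ennreal_leI sum_nonneg)
  qed
  also have "\<dots> \<le> ennreal (real k * M)"
    using nn_integral_sum_abs_responses_le[OF M finite_lessThan] by simp
  finally show "(\<integral>\<^sup>+z. ennreal \<bar>h k z\<bar> \<partial>?R) \<le> ennreal (real k * M)" .
qed (use M in simp)

lemma abs_conditional_mean_le:
  assumes h: "within_response_range h" and k: "k \<ge> 1"
    and M: "(\<integral>\<^sup>+w. ennreal \<bar>snd w\<bar> \<partial>PZ PX Pe F) \<le> ennreal M" "0 \<le> M"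
  shows "\<bar>\<integral>z. h k (z(0 := z1)) \<partial>PiM {1..<k} (\<lambda>_. PZ PX Pe F)\<bar> \<le> \<bar>snd z1\<bar> + real (k - 1) * M"
proof (rule abs_integral_le_of_nn_integral_le)
  let ?Q = "PiM {1..<k} (\<lambda>_. PZ PX Pe F)"
  interpret Q: prob_space ?Q by (intro prob_space_PiM prob_space_PZ)
  have "(\<integral>\<^sup>+z. ennreal \<bar>h k (z(0 := z1))\<bar> \<partial>?Q) \<le>
      (\<integral>\<^sup>+z. ennreal \<bar>snd z1\<bar> + (\<Sum>i\<in>{1..<k}. ennreal \<bar>snd (z i)\<bar>) \<partial>?Q)"
  proof (intro nn_integral_mono)
    fix z assume "z \<in> space ?Q"
    then have "z(0 := z1) \<in> extensional {..<k}"
      using k by (auto simp: space_PiM PiE_def extensional_def)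
    then have "\<bar>h k (z(0 := z1))\<bar> \<le> (\<Sum>i<k. \<bar>snd ((z(0 := z1)) i)\<bar>)"
      by (rule abs_le_sum_abs_responses[OF h k])
    also have "\<dots> = \<bar>snd z1\<bar> + (\<Sum>i\<in>{1..<k}. \<bar>snd (z i)\<bar>)"
    proof -
      have "{..<k} = insert 0 {1..<k}" using k by auto
      then show ?thesis by (simp add: sum.insert_if)
    qed
    finally show "ennreal \<bar>h k (z(0 := z1))\<bar> \<le> ennreal \<bar>snd z1\<bar> + (\<Sum>i\<in>{1..<k}. ennreal \<bar>snd (z i)\<bar>)"
      by (simp add: ennreal_plus[symmetric] sum_nonneg ennreal_leI del: ennreal_plus)
  qed
  also have "\<dots> = (\<integral>\<^sup>+z. ennreal \<bar>snd z1\<bar> \<partial>?Q) + (\<integral>\<^sup>+z. (\<Sum>i\<in>{1..<k}. ennreal \<bar>snd (z i)\<bar>) \<partial>?Q)"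
    by (intro nn_integral_add borel_measurable_sum borel_measurable_abs_response_component) auto
  also have "\<dots> \<le> ennreal \<bar>snd z1\<bar> + ennreal (real (k - 1) * M)"
    unfolding nn_integral_const Q.emeasure_space_1 mult_1_right
    using nn_integral_sum_abs_responses_le[OF M finite_atLeastLessThan, of 1 k] by simp
  also have "\<dots> = ennreal (\<bar>snd z1\<bar> + real (k - 1) * M)"
    using M(2) by (simp add: ennreal_plus[symmetric] del: ennreal_plus)
  finally show "(\<integral>\<^sup>+z. ennreal \<bar>h k (z(0 := z1))\<bar> \<partial>?Q) \<le> ennreal (\<bar>snd z1\<bar> + real (k - 1) * M)" .
qed (use M in simp)

lemma abs_h1_le:
  assumes h: "within_response_range h" and k: "k \<ge> 1"
    and M: "(\<integral>\<^sup>+w. ennreal \<bar>snd w\<bar> \<partial>PZ PX Pe F) \<le> ennreal M" "0 \<le> M"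
  shows "\<bar>h1 h PX Pe F k z1\<bar> \<le> \<bar>snd z1\<bar> + 2 * real k * M"
  using abs_conditional_mean_le[OF assms, of z1] abs_theta_le[OF assms] M(2) k
  unfolding h1_def by (simp add: of_nat_diff algebra_simps)

lemma lindeberg_integral_le:
  assumes h: "within_response_range h" and k: "k \<ge> 1"
    and B: "\<And>x. \<bar>F x\<bar> \<le> B" and \<nu>: "0 < \<nu>"
    and I: "(\<integral>\<^sup>+e. ennreal (exp (\<nu> * \<bar>e\<bar>)) \<partial>Pe) = ennreal Ir" and Ir: "0 \<le> Ir"
    and T: "4 * (B + Ir / \<nu>) * real k \<le> T"
  shows "(\<integral>z. indicator {z. T \<le> \<bar>h1 h PX Pe F k z\<bar>} z * (h1 h PX Pe F k z)\<^sup>2 \<partial>PZ PX Pe F)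
     \<le> 4 * (B + 4 / \<nu>)\<^sup>2 * exp (\<nu> / 2 * B) * Ir * exp (- (\<nu> / 4) * T)"
proof -
  define M where "M = B + Ir / \<nu>"
  define K where "K = (B + 4 / \<nu>)\<^sup>2 * exp (\<nu> / 2 * B) * Ir * exp (- (\<nu> / 2) * (T / 2))"
  have "0 \<le> B" using B[of undefined] by linarith
  then have M: "(\<integral>\<^sup>+w. ennreal \<bar>snd w\<bar> \<partial>PZ PX Pe F) \<le> ennreal M" "0 \<le> M"
    using nn_integral_abs_response_le[OF B \<nu> I Ir] \<nu> Ir by (simp_all add: M_def)
  have pointwise: "indicator {z. T \<le> \<bar>h1 h PX Pe F k z\<bar>} z * (h1 h PX Pe F k z)\<^sup>2
      \<le> 4 * (indicator {y. T / 2 \<le> \<bar>y\<bar>} (snd z) * (snd z)\<^sup>2)" for z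
  proof (cases "T \<le> \<bar>h1 h PX Pe F k z\<bar>")
    case True
    have "\<bar>h1 h PX Pe F k z\<bar> \<le> \<bar>snd z\<bar> + 2 * real k * M"
      by (rule abs_h1_le[OF h k M])
    moreover have "2 * real k * M \<le> T / 2" using T by (simp add: M_def algebra_simps)
    ultimately have "T / 2 \<le> \<bar>snd z\<bar>" "\<bar>h1 h PX Pe F k z\<bar> \<le> 2 * \<bar>snd z\<bar>" using True by linarith+
    then show ?thesis
      using True power_mono[OF \<open>\<bar>h1 h PX Pe F k z\<bar> \<le> 2 * \<bar>snd z\<bar>\<close>, of 2]
      by (simp add: power_mult_distrib)
  qed simp
  have "(\<integral>\<^sup>+z. ennreal \<bar>indicator {z. T \<le> \<bar>h1 h PX Pe F k z\<bar>} z * (h1 h PX Pe F k z)\<^sup>2\<bar> \<partial>PZ PX Pe F)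
      \<le> (\<integral>\<^sup>+z. ennreal 4 * ennreal (indicator {y. T / 2 \<le> \<bar>y\<bar>} (snd z) * (snd z)\<^sup>2) \<partial>PZ PX Pe F)"
    using pointwise by (intro nn_integral_mono, subst ennreal_mult[symmetric]) (auto intro!: ennreal_leI)
  also have "\<dots> = ennreal 4 * (\<integral>\<^sup>+z. ennreal (indicator {y. T / 2 \<le> \<bar>y\<bar>} (snd z) * (snd z)\<^sup>2) \<partial>PZ PX Pe F)"
    by (rule nn_integral_cmult) (simp add: PZ_def measurable_distr_eq1)
  also have "\<dots> \<le> ennreal 4 * ennreal K"
    unfolding K_def by (intro mult_left_mono nn_integral_truncated_sq_response_le B \<nu> I Ir) auto
  also have "\<dots> = ennreal (4 * K)" by (rule ennreal_mult'[symmetric]) simp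
  finally have "\<bar>\<integral>z. indicator {z. T \<le> \<bar>h1 h PX Pe F k z\<bar>} z * (h1 h PX Pe F k z)\<^sup>2 \<partial>PZ PX Pe F\<bar> \<le> 4 * K"
    by (rule abs_integral_le_of_nn_integral_le) (simp add: K_def Ir)
  then show ?thesis by (simp add: K_def mult_ac)
qed

end

theorem proposition1:
  fixes PX :: "'x measure" and Pe :: "real measure" and F :: "'x \<Rightarrow> real"
    and h :: "nat \<Rightarrow> (nat \<Rightarrow> 'x \<times> real) \<Rightarrow> real" and kn :: "nat \<Rightarrow> nat" and c :: real
  assumes PX: "prob_space PX"
    and Pe: "prob_space Pe" "sets Pe = sets borel"
    and F_meas: "F \<in> borel_measurable PX"
    and F_bdd: "\<exists>B. \<forall>x. \<bar>F x\<bar> \<le> B"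
    and tails: "exp_tails Pe"
    and h_meas: "\<And>k. h k \<in> borel_measurable (PiM {..<k} (\<lambda>_. PX \<Otimes>\<^sub>M (borel :: real measure)))"
    and h_sym: "\<And>k z \<sigma>. z \<in> extensional {..<k} \<Longrightarrow> \<sigma> permutes {..<k} \<Longrightarrow> h k (z \<circ> \<sigma>) = h k z"
    and h_tree: "\<And>k z. k \<ge> 1 \<Longrightarrow> z \<in> extensional {..<k} \<Longrightarrow>
        Min ((\<lambda>i. snd (z i)) ` {..<k}) \<le> h k z \<and> h k z \<le> Max ((\<lambda>i. snd (z i)) ` {..<k})"
    and kn_pos: "\<And>n. kn n \<ge> 1"
    and kn_rate: "(\<lambda>n. real (kn n) / sqrt (real n)) \<longlonglongrightarrow> 0"
    and zeta_lim: "\<exists>L. L \<noteq> 0 \<and> (\<lambda>n. zeta1 h PX Pe F (kn n)) \<longlonglongrightarrow> L"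
    and lipschitz: "\<And>n. AE w in (PiM {..<kn n} (\<lambda>_. PZ PX Pe F) \<Otimes>\<^sub>M PX) \<Otimes>\<^sub>M (Pe \<Otimes>\<^sub>M Pe).
        (case w of ((z, x), (e, e')) \<Rightarrow>
          \<bar>h (kn n + 1) (z(kn n := (x, F x + e))) - h (kn n + 1) (z(kn n := (x, F x + e')))\<bar>
            \<le> c * \<bar>(F x + e) - (F x + e')\<bar>)"
  shows "\<forall>\<delta>>0. (\<lambda>n. (1 / zeta1 h PX Pe F (kn n)) *
      (\<integral>z. indicator {z. \<bar>h1 h PX Pe F (kn n) z\<bar> \<ge> \<delta> * sqrt (real n * zeta1 h PX Pe F (kn n))} z
            * (h1 h PX Pe F (kn n) z)\<^sup>2 \<partial>(PZ PX Pe F))) \<longlonglongrightarrow> 0"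
proof -
  interpret additive_noise PX Pe F by (rule additive_noise.intro[OF PX Pe F_meas])
  obtain B where B: "\<And>x. \<bar>F x\<bar> \<le> B" using F_bdd by blast
  then have B0: "0 \<le> B" by (meson abs_ge_zero order_trans)
  obtain \<nu> where \<nu>: "0 < \<nu>" and "(\<integral>\<^sup>+e. ennreal (exp (\<nu> * \<bar>e\<bar>)) \<partial>Pe) < \<infinity>"
    using exp_tails_imp_exp_moment[OF Pe tails] by blast
  then obtain Ir where I: "(\<integral>\<^sup>+e. ennreal (exp (\<nu> * \<bar>e\<bar>)) \<partial>Pe) = ennreal Ir" and Ir: "0 \<le> Ir"
    using ennreal_cases[of "\<integral>\<^sup>+e. ennreal (exp (\<nu> * \<bar>e\<bar>)) \<partial>Pe"] by auto
  obtain L where "L \<noteq> 0" and L: "(\<lambda>n. zeta1 h PX Pe F (kn n)) \<longlonglongrightarrow> L"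
    using zeta_lim by blast
  moreover have "0 \<le> L"
    using L by (rule LIMSEQ_le_const) (auto simp: zeta1_def intro!: integral_nonneg_AE)
  ultimately have "0 < L" by simp
  have h: "within_response_range h" using h_tree by (simp add: within_response_range_def)
  show ?thesis
  proof (intro allI impI)
    fix \<delta> :: real assume "0 < \<delta>"
    show "(\<lambda>n. 1 / zeta1 h PX Pe F (kn n) *
      (\<integral>z. indicator {z. \<bar>h1 h PX Pe F (kn n) z\<bar> \<ge> \<delta> * sqrt (real n * zeta1 h PX Pe F (kn n))} z
            * (h1 h PX Pe F (kn n) z)\<^sup>2 \<partial>PZ PX Pe F)) \<longlonglongrightarrow> 0"
      by (rule lindeberg_ratio_tendsto_zero[OF L \<open>0 < L\<close> kn_rate \<open>0 < \<delta>\<close>, where a = "\<nu> / 4"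
            and b = "4 * (B + Ir / \<nu>)" and C = "4 * (B + 4 / \<nu>)\<^sup>2 * exp (\<nu> / 2 * B) * Ir"
            and Q = "\<lambda>n T. \<integral>z. indicator {z. T \<le> \<bar>h1 h PX Pe F (kn n) z\<bar>} z
              * (h1 h PX Pe F (kn n) z)\<^sup>2 \<partial>PZ PX Pe F"])
         (use \<nu> B0 Ir lindeberg_integral_le[OF h kn_pos B \<nu> I Ir] in \<open>auto intro!: integral_nonneg_AE\<close>)
  qed
qed

end
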